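(* For every integer $n$ with $1\le n\le N$ and every $\delta\in(0,1]$, with probability at least $1-\delta$, \[ \frac{\sum_{t=1}^n (X_t-\mu)}{n}\le (b-a)\sqrt{\frac{\rho_n\log(1/\delta)}{2n}}. \]
   Context: Let $N\ge 2$ and let $\mathcal X=(x_1,\dots,x_N)$ be a finite population of real numbers (repetitions allowed). Let $(X_1,\dots,X_N)=(x_{\pi(1)},\dots,x_{\pi(N)})$, where $\pi$ is a uniformly random permutation of $\{1,\dots,N\}$. For $n\le N$, $(X_1,\dots,X_n)$ is therefore a sample of size $n$ drawn uniformly without replacement from $\mathcal X$. Let $\mu=\frac1N\sum_{i=1}^N x_i$, $a=\min_i x_i$ and $b=\max_i x_i$. Define \[ \rho_n=\begin{cases}1-\frac{n-1}{N} & \text{if } n\le N/2,\\[2pt] \big(1-\frac nN\big)(1+1/n) & \text{if } n>N/2.\end{cases} \] *)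

theory Defs
  imports "HOL-Probability.Probability"
begin

definition rho :: "nat \<Rightarrow> nat \<Rightarrow> real" where
  "rho N n = (if real n \<le> real N / 2 then 1 - (real n - 1) / real N
              else (1 - real n / real N) * (1 + 1 / real n))"

definition unif_perm :: "nat \<Rightarrow> (nat \<Rightarrow> nat) pmf" where
  "unif_perm N = pmf_of_set {\<pi>. \<pi> permutes {1..N}}"

end

theory Submission
  imports Defs "HOL-Combinatorics.Multiset_Permutations"
begin

(* A uniform permutation pi of {1..N} is identified with the uniformly random list
   [pi 1, ..., pi N] enumerating {1..N}; the event of the theorem only concerns the centred
   prefix sum Y_k = x(s_1) + ... + x(s_k) - k mu of such an enumeration s (prefix_dev).
   1. Reverse-martingale step (prefix_dev_Cons): splitting off the first element y,
        Y_(k+1) / (M-k-1) = (x y - mu) / (M-1) + Y'_k / (M-1-k),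
      where Y' refers to the population without y.  Hoeffding's lemma for the uniform
      choice of y and induction on k bound the exponential moment of Y_k / (M-k), summed
      over all enumerations (prefix_dev_mgf_bound).
   2. A Chernoff counting argument with the optimal exponent and the estimate
      sum_(j=M-k)^(M-1) 1/j^2 <= k (M-k+1) / (M (M-k)^2) gives Serfling's bound
      exp (-2 s^2 M / ((b-a)^2 k (M-k+1))) for the fraction of enumerations with Y_k > s.
   3. Y_n for x equals Y_(N-n) for -x on the reversed enumeration; applying step 2 to the
      shorter of the two prefixes yields the exponent -2 s^2 / (n (b-a)^2 rho_n).
   4. With s = n eps this exponent is -ln (1/delta); after the degenerate cases
      (delta = 1, n = N, constant population) the counting bound is transported to
      unif_perm. *)

definition pop_mean :: "('a \<Rightarrow> real) \<Rightarrow> 'a set \<Rightarrow> real" where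
  "pop_mean x A = (\<Sum>i\<in>A. x i) / real (card A)"

definition prefix_dev :: "('a \<Rightarrow> real) \<Rightarrow> 'a set \<Rightarrow> nat \<Rightarrow> 'a list \<Rightarrow> real" where
  "prefix_dev x A k s = sum_list (map x (take k s)) - real k * pop_mean x A"

lemma hoeffding_lemma_population:
  fixes x :: "'a \<Rightarrow> real"
  assumes fin: "finite A" and ne: "A \<noteq> {}" and bnd: "\<forall>i\<in>A. a \<le> x i \<and> x i \<le> b"
    and l: "l > 0"
  shows "(\<Sum>i\<in>A. exp (l * (x i - pop_mean x A))) \<le> real (card A) * exp (l\<^sup>2 * (b - a)\<^sup>2 / 8)"
proof -
  let ?M = "measure_pmf (pmf_of_set A)"
  let ?S = "\<Sum>i\<in>A. exp (l * (x i - pop_mean x A))"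
  interpret interval_bounded_random_variable ?M x a b
    by unfold_locales (use fin ne bnd in \<open>auto simp: AE_measure_pmf_iff\<close>)
  have card: "real (card A) > 0" using fin ne by (simp add: card_gt_0_iff)
  have mean: "integral\<^sup>L ?M x = pop_mean x A"
    unfolding pop_mean_def by (rule integral_pmf_of_set[OF ne fin])
  have "ennreal (?S / card A) = nn_integral ?M (\<lambda>i. exp (l * (x i - integral\<^sup>L ?M x)))"
    using card by (simp add: nn_integral_pmf_of_set[OF ne fin] mean divide_ennreal
        ennreal_of_nat_eq_real_of_nat sum_nonneg sum_ennreal)
  also have "\<dots> \<le> ennreal (exp (l\<^sup>2 * (b - a)\<^sup>2 / 8))"
    by (rule Hoeffdings_lemma_nn_integral[OF l])
  finally have "?S / card A \<le> exp (l\<^sup>2 * (b - a)\<^sup>2 / 8)"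
    by (subst (asm) ennreal_le_iff) auto
  then show ?thesis using card by (simp add: divide_le_eq mult.commute)
qed

lemma sum_permutations_of_set_Cons:
  assumes "finite A" "A \<noteq> {}"
  shows "(\<Sum>s\<in>permutations_of_set A. f s) = (\<Sum>y\<in>A. \<Sum>s\<in>permutations_of_set (A - {y}). f (y # s))"
proof -
  have "(\<Sum>s\<in>permutations_of_set A. f s) = (\<Sum>y\<in>A. \<Sum>s\<in>(#) y ` permutations_of_set (A - {y}). f s)"
    using assms by (subst permutations_of_set_nonempty) (auto intro: sum.UNION_disjoint)
  also have "\<dots> = (\<Sum>y\<in>A. \<Sum>s\<in>permutations_of_set (A - {y}). f (y # s))"
    by (rule sum.cong[OF refl]) (simp add: sum.reindex inj_on_def)
  finally show ?thesis .
qed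

lemma prefix_dev_Cons:
  assumes fin: "finite A" and y: "y \<in> A" and k: "Suc k < card A"
  shows "prefix_dev x A (Suc k) (y # s) / (real (card A) - real (Suc k))
       = (x y - pop_mean x A) / (real (card A) - 1)
         + prefix_dev x (A - {y}) k s / (real (card (A - {y})) - real k)"
proof -
  define M where "M = real (card A)"
  define \<mu> where "\<mu> = pop_mean x A"
  define D E where "D = M - 1 - real k" and "E = M - 1"
  have pos: "D > 0" "E > 0" and ME: "M = E + 1" "real k = E - D"
    using k by (simp_all add: M_def D_def E_def)
  have card: "real (card (A - {y})) = E"
    using fin y k by (simp add: M_def E_def of_nat_diff)
  have total: "(\<Sum>i\<in>A. x i) = M * \<mu>"
    using pos by (simp add: \<mu>_def M_def E_def pop_mean_def)
  have mean: "pop_mean x (A - {y}) = (M * \<mu> - x y) / E"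
    unfolding pop_mean_def card using fin y by (simp add: sum_diff1 total)
  show ?thesis
    unfolding prefix_dev_def card mean \<mu>_def[symmetric] M_def[symmetric]
    using pos by (simp add: ME field_simps)
qed

lemma sum_inverse_squares_le:
  assumes "1 \<le> m" "m \<le> M"
  shows "(\<Sum>j\<in>{m..<M}. 1 / (real j)\<^sup>2) \<le> real (M - m) * (real m + 1) / (real M * (real m)\<^sup>2)"
  using assms(2)
proof (induction M rule: dec_induct)
  case base
  then show ?case by simp
next
  case (step M)
  define p q r where "p = real m" and "q = real M" and "r = real (Suc M)"
  have pq: "p \<ge> 1" "q \<ge> p" using assms step.hyps by (auto simp: p_def q_def)
  have r: "r = q + 1" by (simp add: q_def r_def)
  have gap_nonneg: "(q - p) / (q\<^sup>2 * r * p) \<ge> 0" using pq r by simp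
  have gap: "(q - p) * (p + 1) / (q * p\<^sup>2) + 1 / q\<^sup>2 + (q - p) / (q\<^sup>2 * r * p)
      = (r - p) * (p + 1) / (r * p\<^sup>2)"
  proof -
    have "p > 0" "q > 0" "r > 0" using pq r by simp_all
    then show ?thesis by (simp add: field_simps power2_eq_square) (simp add: r algebra_simps)
  qed
  have "(\<Sum>j\<in>{m..<Suc M}. 1 / (real j)\<^sup>2) = (\<Sum>j\<in>{m..<M}. 1 / (real j)\<^sup>2) + 1 / q\<^sup>2"
    using step.hyps by (simp add: q_def)
  also have "\<dots> \<le> (q - p) * (p + 1) / (q * p\<^sup>2) + 1 / q\<^sup>2"
    using step.IH step.hyps by (simp add: p_def q_def of_nat_diff)
  also have "\<dots> \<le> (r - p) * (p + 1) / (r * p\<^sup>2)"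
    using gap gap_nonneg by linarith
  finally show ?case using step.hyps by (simp add: p_def r_def of_nat_diff)
qed

lemma prefix_dev_mgf_bound:
  fixes x :: "'a \<Rightarrow> real"
  assumes l: "l > 0"
  shows "finite A \<Longrightarrow> k < card A \<Longrightarrow> \<forall>i\<in>A. a \<le> x i \<and> x i \<le> b \<Longrightarrow>
    (\<Sum>s\<in>permutations_of_set A. exp (l * prefix_dev x A k s / (real (card A) - real k)))
    \<le> fact (card A) * exp (l\<^sup>2 * (b - a)\<^sup>2 / 8 * (\<Sum>j\<in>{card A - k..<card A}. 1 / (real j)\<^sup>2))"
proof (induction k arbitrary: A)
  case 0
  then show ?case by (simp add: prefix_dev_def)
next
  case (Suc k)
  define M where "M = card A"
  define c where "c = l\<^sup>2 * (b - a)\<^sup>2 / 8"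
  define T where "T = (\<Sum>j\<in>{M - 1 - k..<M - 1}. 1 / (real j)\<^sup>2)"
  define g where "g y = exp (l / (real M - 1) * (x y - pop_mean x A))" for y
  define F where "F B = (\<Sum>s\<in>permutations_of_set B.
                           exp (l * prefix_dev x B k s / (real (card B) - real k)))" for B
  have fin: "finite A" and Mk: "Suc k < M" and bnd: "\<forall>i\<in>A. a \<le> x i \<and> x i \<le> b"
    using Suc.prems by (auto simp: M_def)
  have ne: "A \<noteq> {}" and M1: "real M - 1 > 0" using Mk by (auto simp: M_def)
  have IH: "F (A - {y}) \<le> fact (M - 1) * exp (c * T)" if "y \<in> A" for y
    using Suc.IH[of "A - {y}"] that fin bnd Mk by (simp add: F_def M_def c_def T_def)
  have "(\<Sum>s\<in>permutations_of_set A. exp (l * prefix_dev x A (Suc k) s / (real M - real (Suc k))))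
      = (\<Sum>y\<in>A. g y * F (A - {y}))"
  proof -
    have "exp (l * prefix_dev x A (Suc k) (y # s) / (real M - real (Suc k)))
        = g y * exp (l * prefix_dev x (A - {y}) k s / (real (card (A - {y})) - real k))"
      if "y \<in> A" for y s
      using prefix_dev_Cons[OF fin that, of k x s] Mk
      by (simp add: g_def M_def mult.assoc flip: times_divide_eq_right exp_add distrib_left)
    then show ?thesis
      unfolding sum_permutations_of_set_Cons[OF fin ne] F_def sum_distrib_left
      by (intro sum.cong refl) simp
  qed
  also have "\<dots> \<le> (\<Sum>y\<in>A. g y) * (fact (M - 1) * exp (c * T))"
    unfolding sum_distrib_right by (intro sum_mono mult_left_mono IH) (auto simp: g_def)
  also have "\<dots> \<le> (real M * exp (c / (real M - 1)\<^sup>2)) * (fact (M - 1) * exp (c * T))"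
  proof (rule mult_right_mono)
    show "(\<Sum>y\<in>A. g y) \<le> real M * exp (c / (real M - 1)\<^sup>2)"
      using hoeffding_lemma_population[OF fin ne bnd, of "l / (real M - 1)"] l M1
      by (simp add: g_def M_def c_def power_divide ac_simps)
  qed simp
  also have "\<dots> = fact M * exp (c * (\<Sum>j\<in>{M - Suc k..<M}. 1 / (real j)\<^sup>2))"
  proof -
    have "fact M = real M * fact (M - 1)" using Mk by (cases M) auto
    moreover have "{M - Suc k..<M} = insert (M - 1) {M - 1 - k..<M - 1}" using Mk by auto
    ultimately show ?thesis
      using Mk by (simp add: T_def of_nat_diff distrib_left exp_add power_divide)
  qed
  finally show ?case by (simp add: M_def c_def)
qed

lemma card_exceed_le_exp_sum:
  fixes g :: "'b \<Rightarrow> real"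
  assumes "finite L" and "l \<ge> 0"
  shows "real (card {\<sigma>\<in>L. g \<sigma> > t}) * exp (l * t) \<le> (\<Sum>\<sigma>\<in>L. exp (l * g \<sigma>))"
proof -
  have "real (card {\<sigma>\<in>L. g \<sigma> > t}) * exp (l * t) = (\<Sum>\<sigma>\<in>{\<sigma>\<in>L. g \<sigma> > t}. exp (l * t))"
    by simp
  also have "\<dots> \<le> (\<Sum>\<sigma>\<in>{\<sigma>\<in>L. g \<sigma> > t}. exp (l * g \<sigma>))"
    using assms(2) by (intro sum_mono) (simp add: mult_left_mono)
  also have "\<dots> \<le> (\<Sum>\<sigma>\<in>L. exp (l * g \<sigma>))"
    using assms(1) by (intro sum_mono2) auto
  finally show ?thesis .
qed

lemma prefix_dev_tail_count:
  fixes x :: "'a \<Rightarrow> real"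
  assumes fin: "finite A" and k: "1 \<le> k" "k < card A" and ab: "a < b"
    and bnd: "\<forall>i\<in>A. a \<le> x i \<and> x i \<le> b" and s: "s > 0"
  shows "real (card {\<sigma>\<in>permutations_of_set A. prefix_dev x A k \<sigma> > s})
     \<le> fact (card A) * exp (- (2 * s\<^sup>2 * real (card A)
                                 / ((b - a)\<^sup>2 * real k * (real (card A) - real k + 1))))"
proof -
  define M where "M = card A"
  define D where "D = real M - real k"
  define S where "S = (\<Sum>j\<in>{M - k..<M}. 1 / (real j)\<^sup>2)"
  define w where "w = (b - a)\<^sup>2"
  define t where "t = s / D"
  \<comment> \<open>the minimiser of the Chernoff exponent l^2 w S / 8 - l t\<close>
  define l where "l = 4 * t / (w * S)"
  have D: "D > 0" and w: "w > 0" and t: "t > 0"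
    using k ab s by (simp_all add: D_def M_def w_def t_def)
  have S: "S > 0"
    unfolding S_def using k by (intro sum_pos) (auto simp: M_def)
  have l: "l > 0" using t w S by (simp add: l_def)
  have S_le: "D\<^sup>2 * S \<le> real k * (D + 1) / real M"
  proof -
    have "real (M - k) = D" "M - (M - k) = k" using k by (simp_all add: D_def M_def of_nat_diff)
    then have "S \<le> real k * (D + 1) / (real M * D\<^sup>2)"
      using sum_inverse_squares_le[of "M - k" M] k by (simp add: S_def M_def)
    moreover have "real M > 0" using k by (simp add: M_def)
    ultimately show ?thesis using D by (simp add: field_simps)
  qed
  have "real (card {\<sigma>\<in>permutations_of_set A. prefix_dev x A k \<sigma> > s}) * exp (l / D * s)
      \<le> (\<Sum>\<sigma>\<in>permutations_of_set A. exp (l / D * prefix_dev x A k \<sigma>))"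
    using l D by (intro card_exceed_le_exp_sum) simp_all
  also have "\<dots> \<le> fact M * exp (l\<^sup>2 * w / 8 * S)"
    using prefix_dev_mgf_bound[OF l fin k(2) bnd] by (simp add: M_def D_def S_def w_def)
  finally have "real (card {\<sigma>\<in>permutations_of_set A. prefix_dev x A k \<sigma> > s})
      \<le> fact M * exp (l\<^sup>2 * w / 8 * S - l * t)"
    by (simp add: exp_diff t_def pos_le_divide_eq)
  also have "l\<^sup>2 * w / 8 * S - l * t = - (2 * s\<^sup>2 / (w * (D\<^sup>2 * S)))"
    using w S D by (simp add: l_def t_def power2_eq_square field_simps)
  also have "\<dots> \<le> - (2 * s\<^sup>2 / (w * (real k * (D + 1) / real M)))"
    using w S D S_le by (intro le_imp_neg_le frac_le mult_left_mono) auto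
  finally show ?thesis
    using k by (simp add: M_def D_def w_def field_simps)
qed

lemma card_filter_bij:
  assumes "bij_betw f P L"
  shows "card {p\<in>P. Q (f p)} = card {s\<in>L. Q s}"
proof -
  have "f ` {p\<in>P. Q (f p)} = {s\<in>L. Q s}" and "inj_on f {p\<in>P. Q (f p)}"
    using assms by (auto simp: bij_betw_def intro: inj_on_subset)
  then show ?thesis by (metis card_image)
qed

lemma prefix_dev_rev:
  assumes s: "s \<in> permutations_of_set A" and n: "n \<le> card A"
  shows "prefix_dev x A n s = prefix_dev (\<lambda>i. - x i) A (card A - n) (rev s)"
proof -
  have fin: "finite A" using s permutations_of_set_infinite by blast
  have set: "set s = A" and dist: "distinct s" and len: "length s = card A"
    using s by (auto dest: permutations_of_setD length_finite_permutations_of_set)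
  have total: "sum_list (map x s) = real (card A) * pop_mean x A"
    using fin set dist by (cases "A = {}") (simp_all add: sum_list_distinct_conv_sum_set pop_mean_def)
  have split: "sum_list (map x s) = sum_list (map x (take n s)) + sum_list (map x (drop n s))"
    by (metis append_take_drop_id map_append sum_list_append)
  have suffix: "take (card A - n) (rev s) = rev (drop n s)"
    using n len by (simp add: take_rev)
  have neg: "sum_list (map (\<lambda>i. - x i) ys) = - sum_list (map x ys)" for ys
    by (induct ys) auto
  have neg_suffix: "sum_list (map (\<lambda>i. - x i) (rev (drop n s))) = - sum_list (map x (drop n s))"
    by (simp only: rev_map[symmetric] sum_list_rev neg)
  have neg_mean: "pop_mean (\<lambda>i. - x i) A = - pop_mean x A"
    by (simp add: pop_mean_def sum_negf)
  show ?thesis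
    using split total n
    unfolding prefix_dev_def suffix neg_suffix neg_mean by (simp add: of_nat_diff algebra_simps)
qed

lemma card_filter_rev:
  "card {s\<in>permutations_of_set A. Q (rev s)} = card {s\<in>permutations_of_set A. Q s}"
proof -
  have "bij_betw rev (permutations_of_set A) (permutations_of_set A)"
    by (rule bij_betw_imageI) (auto simp: inj_on_def)
  then show ?thesis by (rule card_filter_bij)
qed

lemma prefix_dev_full:
  assumes s: "s \<in> permutations_of_set A"
  shows "prefix_dev x A (card A) s = 0"
  using prefix_dev_rev[OF s, of "card A"] by (simp add: prefix_dev_def)

lemma prefix_dev_const:
  assumes s: "s \<in> permutations_of_set A" and k: "k \<le> card A" and const: "\<forall>i\<in>A. x i = c"
  shows "prefix_dev x A k s = 0"
proof (cases "k = 0")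
  case False
  have fin: "finite A" using s permutations_of_set_infinite by blast
  have ne: "A \<noteq> {}" using False k by auto
  have set: "set s = A" and len: "length s = card A"
    using permutations_of_setD[OF s] length_finite_permutations_of_set[OF s] by simp_all
  have "map x (take k s) = map (\<lambda>_. c) (take k s)"
    using const set by (auto dest: in_set_takeD)
  also have "\<dots> = replicate k c"
    using len k by (simp add: map_replicate_const)
  finally have "map x (take k s) = replicate k c" .
  moreover have "pop_mean x A = c"
    using const fin ne by (simp add: pop_mean_def card_gt_0_iff)
  ultimately show ?thesis by (simp add: prefix_dev_def sum_list_replicate)
qed (simp add: prefix_dev_def)

lemma rho_pos:
  assumes "1 \<le> n" "n < N"
  shows "rho N n > 0"
proof (cases "real n \<le> real N / 2")
  case True
  then show ?thesis using assms by (simp add: rho_def field_simps)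
next
  case False
  have "1 - real n / real N > 0" using assms by simp
  then show ?thesis using False assms by (simp add: rho_def add_pos_pos)
qed

lemma rho_nonneg:
  assumes "1 \<le> n" "n \<le> N"
  shows "rho N n \<ge> 0"
  using assms rho_pos[of n N] by (cases "n = N") (simp_all add: rho_def)

(* Serfling's inequality applied to the shorter of the prefix of length n and its
   complement, expressed through rho_n. *)
lemma prefix_dev_tail_count_rho:
  fixes x :: "'a \<Rightarrow> real"
  assumes fin: "finite A" and n: "1 \<le> n" "n < card A" and ab: "a < b"
    and bnd: "\<forall>i\<in>A. a \<le> x i \<and> x i \<le> b" and s: "s > 0"
  shows "real (card {\<sigma>\<in>permutations_of_set A. prefix_dev x A n \<sigma> > s})
     \<le> fact (card A) * exp (- (2 * s\<^sup>2 / (real n * (b - a)\<^sup>2 * rho (card A) n)))"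
proof -
  define N where "N = card A"
  define w where "w = (b - a)\<^sup>2"
  have pos: "real n > 0" "real N > 0" "real N - real n > 0" "w > 0"
    using n ab by (simp_all add: N_def w_def)
  show ?thesis
  proof (cases "real n \<le> real N / 2")
    case True
    define E where "E = real N - real n + 1"
    have "E > 0" using pos by (simp add: E_def)
    have rho: "rho N n = E / real N"
      using True pos by (simp add: rho_def E_def field_simps)
    have "2 * s\<^sup>2 * real N / (w * real n * E) = 2 * s\<^sup>2 / (real n * w * rho N n)"
      using pos \<open>E > 0\<close> unfolding rho by (simp add: field_simps)
    with prefix_dev_tail_count[OF fin n ab bnd s, folded N_def w_def] show ?thesis
      by (simp add: E_def N_def[symmetric] w_def[symmetric] mult.commute[of w])
  next
    case False
    define m where "m = N - n"
    define D E where "D = real N - real n" and "E = real n + 1"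
    have m: "1 \<le> m" "m < N" "real m = D" "real N - real m + 1 = E"
      using n by (auto simp: m_def N_def D_def E_def)
    have "D > 0" "E > 0" using pos by (simp_all add: D_def E_def)
    have rho: "rho N n = D * E / (real N * real n)"
      using False pos by (simp add: rho_def D_def E_def field_simps)
    have exponent: "2 * s\<^sup>2 * real N / (w * real m * (real N - real m + 1))
        = 2 * s\<^sup>2 / (real n * w * rho N n)"
      using pos \<open>D > 0\<close> \<open>E > 0\<close> unfolding m(3,4) rho
      by (simp add: field_simps) (simp add: D_def E_def algebra_simps)
    have "card {\<sigma>\<in>permutations_of_set A. prefix_dev x A n \<sigma> > s}
        = card {\<sigma>\<in>permutations_of_set A. prefix_dev (\<lambda>i. - x i) A m (rev \<sigma>) > s}"
      using prefix_dev_rev[of _ A n x] n by (intro arg_cong[where f = card]) (auto simp: m_def N_def)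
    also have "\<dots> = card {\<sigma>\<in>permutations_of_set A. prefix_dev (\<lambda>i. - x i) A m \<sigma> > s}"
      by (rule card_filter_rev)
    finally have count: "card {\<sigma>\<in>permutations_of_set A. prefix_dev x A n \<sigma> > s}
        = card {\<sigma>\<in>permutations_of_set A. prefix_dev (\<lambda>i. - x i) A m \<sigma> > s}" .
    have width: "(- a - - b)\<^sup>2 = w" by (simp add: w_def power2_commute)
    have bnd': "\<forall>i\<in>A. - b \<le> - x i \<and> - x i \<le> - a" using bnd by auto
    from prefix_dev_tail_count[OF fin _ _ _ bnd' s, of m, folded N_def] m ab show ?thesis
      unfolding count width exponent N_def[symmetric] w_def[symmetric]
      by (simp add: mult.commute[of w])
  qed
qed

lemma prefix_dev_confidence_count:
  fixes x :: "'a \<Rightarrow> real"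
  assumes fin: "finite A" and n: "1 \<le> n" "n \<le> card A" and \<delta>: "0 < \<delta>" "\<delta> \<le> 1"
    and bnd: "\<forall>i\<in>A. a \<le> x i \<and> x i \<le> b"
  defines "\<epsilon> \<equiv> (b - a) * sqrt (rho (card A) n * ln (1 / \<delta>) / (2 * real n))"
  shows "real (card {\<sigma>\<in>permutations_of_set A. prefix_dev x A n \<sigma> > real n * \<epsilon>})
         \<le> \<delta> * fact (card A)"
proof -
  let ?B = "{\<sigma>\<in>permutations_of_set A. prefix_dev x A n \<sigma> > real n * \<epsilon>}"
  define N where "N = card A"
  have "A \<noteq> {}" using n by auto
  then have ab: "a \<le> b" using bnd by fastforce
  have eps: "\<epsilon> \<ge> 0" using ab \<delta> rho_nonneg[OF n] by (simp add: \<epsilon>_def)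
  consider "\<delta> = 1" | "n = N \<or> a = b" | "\<delta> < 1" "n < N" "a < b"
    using ab \<delta> n by (fastforce simp: N_def)
  then show ?thesis
  proof cases
    case 1
    have "real (card ?B) \<le> real (card (permutations_of_set A))" by (intro of_nat_mono card_mono) auto
    then show ?thesis using 1 fin by simp
  next
    case 2
    have "prefix_dev x A n \<sigma> = 0" if "\<sigma> \<in> permutations_of_set A" for \<sigma>
    proof (cases "n = N")
      case True
      then show ?thesis using prefix_dev_full[OF that] by (simp add: N_def)
    next
      case False
      then have "\<forall>i\<in>A. x i = b" using 2 bnd by force
      then show ?thesis by (rule prefix_dev_const[OF that n(2)])
    qed
    then have empty: "?B = {}" using eps by (auto simp: not_less)
    show ?thesis unfolding empty using \<delta> by simp
  next
    case 3
    define L where "L = ln (1 / \<delta>)"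
    define w where "w = (b - a)\<^sup>2"
    have L: "L > 0" "exp (- L) = \<delta>" using 3 \<delta> by (simp_all add: L_def ln_div)
    have w: "w > 0" using 3 by (simp add: w_def)
    have rho: "rho N n > 0" using 3 n by (intro rho_pos) auto
    have sq: "(real n * \<epsilon>)\<^sup>2 = (real n)\<^sup>2 * w * (rho N n * L / (2 * real n))"
      using rho L by (simp add: \<epsilon>_def L_def N_def w_def power_mult_distrib)
    have exponent: "2 * (real n * \<epsilon>)\<^sup>2 / (real n * w * rho N n) = L"
      unfolding sq using n w rho by (simp add: field_simps power2_eq_square)
    have "real n * \<epsilon> > 0" using 3 n L rho by (simp add: \<epsilon>_def L_def N_def)
    from prefix_dev_tail_count_rho[OF fin n(1) _ _ bnd this] 3 show ?thesis
      unfolding N_def[symmetric] w_def[symmetric] exponent L(2) by (simp add: mult.commute)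
  qed
qed

lemma bij_betw_permutes_map:
  assumes xs: "xs \<in> permutations_of_set A"
  shows "bij_betw (\<lambda>\<pi>. map \<pi> xs) {\<pi>. \<pi> permutes A} (permutations_of_set A)"
proof -
  let ?f = "\<lambda>\<pi>. map \<pi> xs" and ?P = "{\<pi>. \<pi> permutes A}"
  have fin: "finite A" using xs permutations_of_set_infinite by blast
  have set: "set xs = A" using permutations_of_setD[OF xs] by simp
  have inj: "inj_on ?f ?P"
  proof (rule inj_onI)
    fix p q assume "p \<in> ?P" "q \<in> ?P" "map p xs = map q xs"
    then show "p = q"
      using set by (auto simp: fun_eq_iff permutes_not_in map_eq_conv)
  qed
  have image: "?f ` ?P \<subseteq> permutations_of_set A"
    using permutations_of_set_image_permutes xs by blast
  have "card (?f ` ?P) = card (permutations_of_set A)"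
    using card_image[OF inj] card_permutations[OF refl fin] fin by simp
  then show ?thesis
    using inj image card_subset_eq[OF finite_permutations_of_set image] by (simp add: bij_betw_def)
qed

lemma prob_permutes_event:
  assumes xs: "xs \<in> permutations_of_set A"
  shows "measure_pmf.prob (pmf_of_set {\<pi>. \<pi> permutes A}) {\<pi>. Q (map \<pi> xs)}
     = 1 - real (card {s\<in>permutations_of_set A. \<not> Q s}) / fact (card A)"
proof -
  let ?P = "{\<pi>. \<pi> permutes A}" and ?L = "permutations_of_set A"
  have fin: "finite A" using xs permutations_of_set_infinite by blast
  have bij: "bij_betw (\<lambda>\<pi>. map \<pi> xs) ?P ?L" by (rule bij_betw_permutes_map[OF xs])
  have card_P: "real (card ?P) = fact (card A)" using card_permutations[OF refl fin] by simp
  have "finite ?P" "?P \<noteq> {}" using fin finite_permutations permutes_id by blast+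
  then have "measure_pmf.prob (pmf_of_set ?P) {\<pi>. Q (map \<pi> xs)}
      = card {\<pi>\<in>?P. Q (map \<pi> xs)} / fact (card A)"
    unfolding card_P[symmetric] by (simp add: measure_pmf_of_set Int_def conj_commute)
  also have "card {\<pi>\<in>?P. Q (map \<pi> xs)} = card {s\<in>?L. Q s}"
    by (rule card_filter_bij[OF bij])
  also have "{s\<in>?L. Q s} = ?L - {s\<in>?L. \<not> Q s}" by auto
  finally show ?thesis
    using fin card_mono[of ?L "{s\<in>?L. \<not> Q s}"]
    by (simp add: card_Diff_subset of_nat_diff diff_divide_distrib)
qed

lemma sum_prefix_eq_prefix_dev:
  assumes "n \<le> N"
  shows "(\<Sum>t=1..n. x (\<pi> t) - pop_mean x {1..N}) = prefix_dev x {1..N} n (map \<pi> [1..<N+1])"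
proof -
  have "take n [1..<N+1] = [1..<1+n]" by (rule take_upt) (use assms in simp)
  then have "take n (map \<pi> [1..<N+1]) = map \<pi> [1..<n+1]" by (simp only: take_map add.commute)
  moreover have "{1..<n+1} = {1..n}" by auto
  then have "sum_list (map x (map \<pi> [1..<n+1])) = (\<Sum>t=1..n. x (\<pi> t))"
    by (simp only: map_map interv_sum_list_conv_sum_set_nat set_upt o_def)
  ultimately show ?thesis by (simp add: prefix_dev_def sum_subtractf)
qed

theorem corollary1:
  fixes N n :: nat and x :: "nat \<Rightarrow> real" and \<delta> :: real
  assumes "N \<ge> 2"
    and "1 \<le> n" and "n \<le> N"
    and "0 < \<delta>" and "\<delta> \<le> 1"
  defines "\<mu> \<equiv> (\<Sum>i=1..N. x i) / real N"
    and "a \<equiv> Min (x ` {1..N})"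
    and "b \<equiv> Max (x ` {1..N})"
  shows "measure_pmf.prob (unif_perm N)
           {\<pi>. (\<Sum>t=1..n. x (\<pi> t) - \<mu>) / real n
                 \<le> (b - a) * sqrt (rho N n * ln (1 / \<delta>) / (2 * real n))}
         \<ge> 1 - \<delta>"
proof -
  define \<epsilon> where "\<epsilon> = (b - a) * sqrt (rho N n * ln (1 / \<delta>) / (2 * real n))"
  define idx where "idx = [1..<N+1]"
  define Q where "Q s \<longleftrightarrow> prefix_dev x {1..N} n s \<le> real n * \<epsilon>" for s
  have idx: "idx \<in> permutations_of_set {1..N}"
    unfolding idx_def by (rule permutations_of_setI) (auto simp del: upt_Suc)
  have bnd: "\<forall>i\<in>{1..N}. a \<le> x i \<and> x i \<le> b" by (simp add: a_def b_def)
  have event: "{\<pi>. (\<Sum>t=1..n. x (\<pi> t) - \<mu>) / real n \<le> \<epsilon>} = {\<pi>. Q (map \<pi> idx)}"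
    using assms(2,3) sum_prefix_eq_prefix_dev[of n N x, folded idx_def]
    by (simp add: Q_def \<mu>_def pop_mean_def divide_le_eq mult.commute)
  have "real (card {s\<in>permutations_of_set {1..N}. \<not> Q s}) \<le> \<delta> * fact N"
    using prefix_dev_confidence_count[of "{1..N}" n \<delta> a x b] assms(2-5) bnd
    by (simp add: Q_def not_le \<epsilon>_def)
  then show ?thesis
    unfolding \<epsilon>_def[symmetric] event unif_perm_def prob_permutes_event[OF idx]
    by (simp add: field_simps)
qed

end
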